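(* Let $\nu\in\mathbb{R}$. Define polynomials $\tilde F_s(\beta)$, $s=1,2,3,\ldots$, by $$\tilde F_1(\beta)=\tfrac18(4\nu^2-1)(\beta^2-1),\qquad \tilde F_2(\beta)=\tfrac18(4\nu^2-1)\beta(\beta^2-1),$$ $$\tilde F_{s+1}(\beta)=\tfrac12(\beta^2-1)\frac{d\tilde F_s(\beta)}{d\beta}-\tfrac12\sum_{j=1}^{s-1}\tilde F_j(\beta)\tilde F_{s-j}(\beta)\quad(s=2,3,4,\ldots),$$ and $\tilde E_s(\beta)=-\int_0^\beta \frac{\tilde F_s(b)}{b^2-1}\,db$. Define constants $a_s(\nu)$ by $a_1(\nu)=a_2(\nu)=\tfrac18(4\nu^2-1)$ and $a_{s+1}(\nu)=\tfrac12(s+1)a_s(\nu)-\tfrac12\sum_{j=1}^{s-1}a_j(\nu)a_{s-j}(\nu)$. With $\xi=\ln\!\big(z+\sqrt{z^2-1}\big)$ and $\beta=z/\sqrt{z^2-1}$, put $$\mathcal{E}_s(\nu,z)=\tilde E_s(\beta)+(-1)^{s+1}\frac{a_s(\nu)}{s\,\xi^s}.$$ Then $(z-1)^{1/2}\mathcal{E}_{2s+1}(\nu,z)$ and $\mathcal{E}_{2s}(\nu,z)$ ($s=1,2,3,\ldots$) are meromorphic functions at $z=1$.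
   Context: All multivalued functions ($\sqrt{z^2-1}$, $(z-1)^{1/2}$, the logarithm) take their principal branches in the $z$-plane cut along $(-\infty,1]$. *)

theory Defs
  imports "HOL-Complex_Analysis.Complex_Analysis" "HOL-Computational_Algebra.Polynomial"
begin

definition c0 :: "real \<Rightarrow> real" where
  "c0 \<nu> = (4 * \<nu>^2 - 1) / 8"

text \<open>The polynomials F~_s (s = 1,2,...), as complex polynomials in beta; index 0 unused.\<close>
fun Ft :: "real \<Rightarrow> nat \<Rightarrow> complex poly" where
  "Ft \<nu> 0 = 0"
| "Ft \<nu> (Suc 0) = smult (of_real (c0 \<nu>)) [:-1, 0, 1:]"
| "Ft \<nu> (Suc (Suc 0)) = smult (of_real (c0 \<nu>)) ([:0, 1:] * [:-1, 0, 1:])"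
| "Ft \<nu> (Suc (Suc (Suc n))) =
     smult (1/2) ([:-1, 0, 1:] * pderiv (Ft \<nu> (Suc (Suc n))))
     - smult (1/2) (\<Sum>j\<in>{1..Suc n}. Ft \<nu> j * Ft \<nu> (Suc (Suc n) - j))"

definition Et :: "real \<Rightarrow> nat \<Rightarrow> complex \<Rightarrow> complex" where
  "Et \<nu> s \<beta> = - contour_integral (linepath 0 \<beta>) (\<lambda>b. poly (Ft \<nu> s) b / (b^2 - 1))"

text \<open>The constants a_s(nu); index 0 unused.\<close>
fun a :: "real \<Rightarrow> nat \<Rightarrow> real" where
  "a \<nu> 0 = 0"
| "a \<nu> (Suc 0) = c0 \<nu>"
| "a \<nu> (Suc (Suc 0)) = c0 \<nu>"
| "a \<nu> (Suc (Suc (Suc n))) =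
     (1/2) * real (Suc (Suc (Suc n))) * a \<nu> (Suc (Suc n))
     - (1/2) * (\<Sum>j\<in>{1..Suc n}. a \<nu> j * a \<nu> (Suc (Suc n) - j))"

text \<open>Branch of sqrt(z^2-1) analytic in the plane cut along (-infinity,1], positive for z>1.\<close>
definition sqrtz2m1 :: "complex \<Rightarrow> complex" where
  "sqrtz2m1 z = csqrt (z - 1) * csqrt (z + 1)"

definition xi :: "complex \<Rightarrow> complex" where
  "xi z = Ln (z + sqrtz2m1 z)"

definition beta :: "complex \<Rightarrow> complex" where
  "beta z = z / sqrtz2m1 z"

definition calE :: "real \<Rightarrow> nat \<Rightarrow> complex \<Rightarrow> complex" where
  "calE \<nu> s z = Et \<nu> s (beta z) + (-1)^(s+1) * of_real (a \<nu> s) / (of_nat s * xi z ^ s)"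

definition cut :: "complex set" where
  "cut = {x. Im x = 0 \<and> Re x \<le> 1}"

end

theory Submission
  imports Defs
begin

text \<open>
  F~_s is divisible by beta^2 - 1 and has the parity of s + 1, both properties being
  preserved by the recursion; so E~_s is a polynomial of parity s. An even polynomial
  in beta is a polynomial in beta^2 = z^2 / (z^2 - 1), a rational function of z; an odd
  one is beta times such a polynomial, and sqrt(z - 1) beta = z / sqrt(z + 1) is analytic
  at 1. For the a_s-term, xi = 2 arsinh t with t = sqrt((z - 1) / 2). As arsinh is odd,
  xi^2 and t xi are even analytic functions of t, hence analytic functions of
  t^2 = (z - 1) / 2; so xi^(-2s) and sqrt(z - 1) xi^(-2s-1) = sqrt(z - 1) xi / (xi^2)^(s+1)
  are meromorphic at 1. These identities hold at every point near 1, on the cut as well,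
  so the functions themselves are meromorphic there, for every s and any constants a_s.
\<close>

lemma poly_even_odd_parts:
  fixes p :: "'a::comm_ring_1 poly"
  shows "\<exists>pe po. \<forall>x. poly p x = poly pe (x^2) + x * poly po (x^2)"
proof (induction p)
  case (pCons c p)
  then obtain pe po where "\<forall>x. poly p x = poly pe (x^2) + x * poly po (x^2)" by blast
  then have "\<forall>x. poly (pCons c p) x = poly (pCons c po) (x^2) + x * poly pe (x^2)"
    by (simp add: algebra_simps power2_eq_square)
  then show ?case by blast
qed (intro exI[of _ 0], simp)

lemma even_poly_eq_poly_square:
  fixes p :: "'a::{idom, ring_char_0} poly"
  assumes "\<And>x. poly p (-x) = poly p x"
  shows "\<exists>pe. \<forall>x. poly p x = poly pe (x^2)"
proof -
  obtain pe po where parts: "\<And>x. poly p x = poly pe (x^2) + x * poly po (x^2)"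
    using poly_even_odd_parts by blast
  have "x * poly po (x^2) = 0" for x
    using assms[of x] parts[of x] parts[of "-x"] by simp
  then show ?thesis using parts by (metis add.right_neutral)
qed

lemma odd_poly_eq_poly_square:
  fixes p :: "'a::{idom, ring_char_0} poly"
  assumes "\<And>x. poly p (-x) = - poly p x"
  shows "\<exists>po. \<forall>x. poly p x = x * poly po (x^2)"
proof -
  obtain pe po where parts: "\<And>x. poly p x = poly pe (x^2) + x * poly po (x^2)"
    using poly_even_odd_parts by blast
  have "poly pe (x^2) = 0" for x
    using assms[of x] parts[of x] parts[of "-x"] by (simp add: eq_neg_iff_add_eq_0)
  then show ?thesis using parts by (metis add_0)
qed

lemma exists_pderiv_eq_vanishing_at_0:
  fixes p :: "'a::field_char_0 poly"
  shows "\<exists>q. pderiv q = p \<and> poly q 0 = 0"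
proof -
  define q where "q = (\<Sum>i\<le>degree p. monom (coeff p i / of_nat (Suc i)) (Suc i))"
  have "pderiv q = (\<Sum>i\<le>degree p. pderiv (monom (coeff p i / of_nat (Suc i)) (Suc i)))"
    using higher_pderiv_sum[of 1] by (simp add: q_def)
  also have "\<dots> = (\<Sum>i\<le>degree p. monom (coeff p i) i)"
    by (intro sum.cong refl) (simp add: pderiv_monom del: of_nat_Suc)
  also have "\<dots> = p" by (rule poly_as_sum_of_monoms)
  finally have "pderiv q = p" .
  moreover have "poly q 0 = 0" by (simp add: q_def poly_sum poly_monom)
  ultimately show ?thesis by blast
qed

lemma antiderivative_parity:
  fixes q :: "'a::{idom, ring_char_0} poly"
  assumes "pderiv q \<circ>\<^sub>p [:0, -1:] = smult c (pderiv q)" and "poly q 0 = 0"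
  shows "q \<circ>\<^sub>p [:0, -1:] = smult (-c) q"
proof -
  define r where "r = q \<circ>\<^sub>p [:0, -1:] + smult c q"
  have "pderiv r = 0"
    using assms(1) by (simp add: r_def pderiv_add pderiv_smult pderiv_pcompose pderiv_pCons)
  then obtain h where "r = [:h:]" using pderiv_iszero by blast
  moreover have "poly r 0 = 0" using assms(2) by (simp add: r_def poly_pcompose)
  ultimately have "r = 0" by simp
  then show ?thesis by (simp add: r_def eq_neg_iff_add_eq_0)
qed

lemma has_contour_integral_poly_quotient_linepath:
  fixes p q r :: "complex poly"
  assumes "q \<noteq> 0" and "pderiv r = p"
  shows "((\<lambda>b. poly (q * p) b / poly q b) has_contour_integral poly r \<beta> - poly r \<alpha>) (linepath \<alpha> \<beta>)"
proof (cases "\<alpha> = \<beta>")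
  case False
  have "(poly p has_contour_integral poly r \<beta> - poly r \<alpha>) (linepath \<alpha> \<beta>)"
    using contour_integral_primitive[of UNIV "poly r" "poly p" "linepath \<alpha> \<beta>"] poly_DERIV[of r] assms(2)
    by simp
  then have prim: "((\<lambda>t. poly p (linepath \<alpha> \<beta> t) * (\<beta> - \<alpha>)) has_integral poly r \<beta> - poly r \<alpha>) {0..1}"
    by (simp add: has_contour_integral_linepath)
  have "finite (linepath \<alpha> \<beta> -` {b. poly q b = 0} \<inter> {0..1})"
    using assms(1) False by (intro finite_vimage_IntI poly_roots_finite inj_on_linepath)
  then have "((\<lambda>t. poly (q * p) (linepath \<alpha> \<beta> t) / poly q (linepath \<alpha> \<beta> t) * (\<beta> - \<alpha>))
              has_integral poly r \<beta> - poly r \<alpha>) {0..1}"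
    by (rule has_integral_spike_finite[OF _ _ prim]) auto
  then show ?thesis by (simp add: has_contour_integral_linepath)
qed simp

lemma smult_sum_right: "smult c (sum f A) = (\<Sum>i\<in>A. smult c (f i))"
  by (induction A rule: infinite_finite_induct) (simp_all add: smult_add_right)

lemma square_minus_one_parity: "[:-1, 0, 1:] \<circ>\<^sub>p [:0, -1:] = [:-1, 0, 1::'a::comm_ring_1:]"
  by (simp add: pcompose_pCons)

lemma Ft_divisible: "[:-1, 0, 1:] dvd Ft \<nu> n"
proof (induction \<nu> n rule: Ft.induct)
  case (4 \<nu> n)
  then have "[:-1, 0, 1:] dvd (\<Sum>j\<in>{1..Suc n}. Ft \<nu> j * Ft \<nu> (Suc (Suc n) - j))"
    by (intro dvd_sum dvd_mult2) auto
  then show ?case by (simp only: Ft.simps) (intro dvd_diff dvd_smult dvd_mult2 dvd_refl)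
qed (simp_all only: Ft.simps dvd_0_right dvd_smult dvd_mult dvd_refl)

lemma Ft_parity: "Ft \<nu> n \<circ>\<^sub>p [:0, -1:] = smult ((-1) ^ (n + 1)) (Ft \<nu> n)"
proof (induction \<nu> n rule: Ft.induct)
  case (4 \<nu> n)
  define F where "F j = Ft \<nu> j" for j
  define m where "m = Suc (Suc n)"
  have "(F j * F (m - j)) \<circ>\<^sub>p [:0, -1:] = smult ((-1) ^ m) (F j * F (m - j))"
    if "j \<in> {1..Suc n}" for j
  proof -
    have "(F j * F (m - j)) \<circ>\<^sub>p [:0, -1:] = smult ((-1) ^ (j + 1 + (m - j + 1))) (F j * F (m - j))"
      using "4.IH"(2,3)[OF that] by (simp add: F_def m_def pcompose_mult power_add mult_ac)
    also have "j + 1 + (m - j + 1) = m + 2" using that by (simp add: m_def)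
    finally show ?thesis by simp
  qed
  then have sum: "(\<Sum>j\<in>{1..Suc n}. F j * F (m - j)) \<circ>\<^sub>p [:0, -1:]
      = smult ((-1) ^ m) (\<Sum>j\<in>{1..Suc n}. F j * F (m - j))"
    by (simp only: pcompose_sum smult_sum_right) (rule sum.cong, simp_all)
  have "pderiv (F m) \<circ>\<^sub>p [:0, -1:] = - pderiv (F m \<circ>\<^sub>p [:0, -1:])"
    by (simp add: pderiv_pcompose pderiv_pCons)
  also have "\<dots> = smult ((-1) ^ m) (pderiv (F m))"
    using "4.IH"(1) by (simp add: F_def m_def pderiv_smult pderiv_minus)
  finally have deriv: "pderiv (F m) \<circ>\<^sub>p [:0, -1:] = smult ((-1) ^ m) (pderiv (F m))" .
  have "Ft \<nu> (Suc (Suc (Suc n))) = smult (1/2) ([:-1, 0, 1:] * pderiv (F m))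
      - smult (1/2) (\<Sum>j\<in>{1..Suc n}. F j * F (m - j))"
    by (simp only: Ft.simps F_def m_def)
  then show ?case
    by (simp only: pcompose_diff pcompose_smult pcompose_mult sum deriv square_minus_one_parity)
      (simp add: smult_diff_right m_def)
qed (simp_all add: pcompose_smult pcompose_mult pcompose_pCons)

lemma Et_poly_parity:
  "\<exists>q. (\<forall>b. Et \<nu> n b = poly q b) \<and> (\<forall>b. poly q (-b) = (-1) ^ n * poly q b)"
proof -
  obtain p where Ft_eq: "Ft \<nu> n = [:-1, 0, 1:] * p" using Ft_divisible by (blast elim: dvdE)
  have "[:-1, 0, 1:] * (p \<circ>\<^sub>p [:0, -1:]) = [:-1, 0, 1:] * smult ((-1) ^ (n + 1)) p"
    using Ft_parity[of \<nu> n] unfolding Ft_eq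
    by (simp only: pcompose_mult square_minus_one_parity mult_smult_right)
  then have "p \<circ>\<^sub>p [:0, -1:] = smult ((-1) ^ (n + 1)) p"
    by (subst (asm) mult_left_cancel) simp_all
  moreover obtain r where r: "pderiv r = p" "poly r 0 = 0"
    using exists_pderiv_eq_vanishing_at_0 by blast
  ultimately have "r \<circ>\<^sub>p [:0, -1:] = smult ((-1) ^ n) r"
    using antiderivative_parity[of r "(-1) ^ (n + 1)"] by simp
  then have "poly r (-b) = (-1) ^ n * poly r b" for b
    using poly_pcompose[of r "[:0, -1:]" b] by simp
  moreover have "Et \<nu> n b = - poly r b" for b
  proof -
    have "((\<lambda>b. poly (Ft \<nu> n) b / (b^2 - 1)) has_contour_integral poly r b - poly r 0) (linepath 0 b)"
      using has_contour_integral_poly_quotient_linepath[of "[:-1, 0, 1:]" r p b 0] r(1)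
      by (simp add: Ft_eq power2_eq_square)
    then show ?thesis using r(2) by (simp add: Et_def contour_integral_unique)
  qed
  ultimately show ?thesis by (intro exI[of _ "-r"]) simp
qed

lemma holomorphic_even_eq_comp_square:
  fixes f :: "complex \<Rightarrow> complex"
  assumes holf: "f holomorphic_on ball 0 r" and even: "\<And>t. t \<in> ball 0 r \<Longrightarrow> f (-t) = f t"
    and "r > 0"
  shows "\<exists>g. g holomorphic_on ball 0 (r^2) \<and> (\<forall>t \<in> ball 0 r. f t = g (t^2))"
proof (intro exI[of _ "\<lambda>v. f (csqrt v)"] conjI ballI)
  have csqrt_in_ball: "csqrt v \<in> ball 0 r" if "v \<in> ball 0 (r^2)" for v
    using that real_sqrt_less_mono[of "norm v" "r^2"] \<open>r > 0\<close> by simp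
  define U1 :: "complex set" where "U1 = ball 0 (r^2) - \<real>\<^sub>\<le>\<^sub>0"
  define U2 :: "complex set" where "U2 = ball 0 (r^2) - \<real>\<^sub>\<ge>\<^sub>0"
  have "(\<lambda>v. f (csqrt v)) holomorphic_on U1"
    using csqrt_in_ball
    by (intro holomorphic_on_compose_gen[OF _ holf, unfolded o_def] holomorphic_intros)
       (auto simp: U1_def)
  moreover have "(\<lambda>v. f (csqrt v)) holomorphic_on U2"
  proof (rule holomorphic_transform)
    \<comment> \<open>off the positive reals, \<open>\<i> * csqrt (-v)\<close> is a holomorphic square root, and \<open>f\<close> is even\<close>
    show "(\<lambda>v. f (\<i> * csqrt (-v))) holomorphic_on U2"
      using csqrt_in_ball
      by (intro holomorphic_on_compose_gen[OF _ holf, unfolded o_def] holomorphic_intros)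
         (auto simp: U2_def complex_nonpos_Reals_iff complex_nonneg_Reals_iff norm_mult)
  next
    fix v assume "v \<in> U2"
    have "(\<i> * csqrt (-v))^2 = (csqrt v)^2" by (simp add: power_mult_distrib)
    then have "\<i> * csqrt (-v) = csqrt v \<or> \<i> * csqrt (-v) = - csqrt v"
      using power2_eq_iff by blast
    with even csqrt_in_ball \<open>v \<in> U2\<close> show "f (\<i> * csqrt (-v)) = f (csqrt v)"
      by (auto simp: U2_def)
  qed
  moreover have "open U1" "open U2"
    by (auto simp: U1_def U2_def intro: open_Diff)
  moreover have "ball 0 (r^2) - {0} \<subseteq> U1 \<union> U2"
    by (auto simp: U1_def U2_def complex_nonpos_Reals_iff complex_nonneg_Reals_iff complex_eq_iff)
  ultimately have punctured: "(\<lambda>v. f (csqrt v)) holomorphic_on ball 0 (r^2) - {0}"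
    by (meson holomorphic_on_Un holomorphic_on_subset)
  have "isCont f 0"
    using holf \<open>r > 0\<close> by (intro continuous_on_interior[OF holomorphic_on_imp_continuous_on]) auto
  moreover have "((\<lambda>v. norm (csqrt v)) \<longlongrightarrow> 0) (at 0 within ball 0 (r^2))"
    using tendsto_real_sqrt[OF tendsto_norm_zero[OF tendsto_ident_at]] by simp
  then have "(csqrt \<longlongrightarrow> 0) (at 0 within ball 0 (r^2))"
    by (rule tendsto_norm_zero_cancel)
  ultimately have lim: "((\<lambda>v. f (csqrt v)) \<longlongrightarrow> f 0) (at 0 within ball 0 (r^2))"
    by (rule isCont_tendsto_compose)
  show "(\<lambda>v. f (csqrt v)) holomorphic_on ball 0 (r^2)"
  proof (rule no_isolated_singularity'[where K = "{0}"])
    show "((\<lambda>v. f (csqrt v)) \<longlongrightarrow> f (csqrt z)) (at z within ball 0 (r^2))" if "z \<in> {0}" for z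
      using lim that by simp
  qed (use punctured in auto)
next
  fix t :: complex assume "t \<in> ball 0 r"
  moreover have "csqrt (t^2) = t \<or> csqrt (t^2) = - t"
    using power2_eq_iff[of "csqrt (t^2)" t] by simp
  ultimately show "f t = f (csqrt (t^2))" using even by auto
qed

lemma arsinh_complex_eq: "arsinh t = Ln (t + csqrt (t^2 + 1))"
  by (simp add: arsinh_def csqrt_conv_powr)

lemma Re_arsinh_args_pos:
  fixes t :: complex
  assumes "norm t < 1/2"
  shows "Re (t^2 + 1) > 0" and "Re (t + csqrt (t^2 + 1)) > 0"
proof -
  have "(Re t)^2 + (Im t)^2 < 1/4"
    using assms power_strict_mono[of "norm t" "1/2" 2] by (simp add: cmod_power2 power_divide)
  then have Re_square: "Re (t^2 + 1) > 3/4"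
    by (simp add: Re_power2) (use zero_le_power2[of "Re t"] in linarith)
  then show "Re (t^2 + 1) > 0" by linarith
  define c where "c = csqrt (t^2 + 1)"
  have "Re (c^2) = Re (t^2 + 1)" unfolding c_def by simp
  then have "(Re c)^2 - (Im c)^2 > 3/4" using Re_square by (simp add: Re_power2)
  then have "(Re c)^2 > 1/4" using zero_le_power2[of "Im c"] by linarith
  moreover have "Re c \<ge> 0" unfolding c_def by (rule Re_csqrt)
  ultimately have "Re c > 1/2" using power2_less_imp_less[of "1/2" "Re c"] by (simp add: power_divide)
  moreover have "\<bar>Re t\<bar> < 1/2" using assms abs_Re_le_cmod[of t] by linarith
  ultimately show "Re (t + csqrt (t^2 + 1)) > 0" by (simp add: c_def)
qed

lemma holomorphic_on_arsinh_ball: "(arsinh :: complex \<Rightarrow> complex) holomorphic_on ball 0 (1/2)"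
proof -
  have "(\<lambda>t. Ln (t + csqrt (t^2 + 1))) holomorphic_on ball 0 (1/2)"
  proof (intro holomorphic_intros)
    fix t :: complex assume "t \<in> ball 0 (1/2)"
    then show "t^2 + 1 \<notin> \<real>\<^sub>\<le>\<^sub>0" "t + csqrt (t^2 + 1) \<notin> \<real>\<^sub>\<le>\<^sub>0"
      using Re_arsinh_args_pos[of t] complex_nonpos_Reals_iff by (metis mem_ball_0 not_le)+
  qed
  then show ?thesis by (simp add: arsinh_complex_eq[abs_def])
qed

lemma arsinh_minus_complex:
  fixes t :: complex
  assumes "norm t < 1/2"
  shows "arsinh (-t) = - arsinh t"
proof -
  define c where "c = csqrt (t^2 + 1)"
  have pos: "Re (t + c) > 0" using Re_arsinh_args_pos[OF assms] by (simp add: c_def)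
  then have "t + c \<noteq> 0" by (metis less_irrefl zero_complex.sel(1))
  moreover have "(t + c) * (c - t) = 1" by (simp add: c_def algebra_simps flip: power2_eq_square)
  ultimately have "c - t = inverse (t + c)" by (simp add: field_simps)
  then have "arsinh (-t) = Ln (inverse (t + c))" by (simp add: arsinh_complex_eq c_def)
  also have "\<dots> = - Ln (t + c)" using pos by (intro Ln_inverse) (auto simp: complex_nonpos_Reals_iff)
  finally show ?thesis by (simp add: arsinh_complex_eq c_def)
qed

lemma half_csqrt_shift:
  fixes z :: complex
  assumes "norm (z - 1) < 1/2"
  shows "(csqrt (z - 1) / sqrt 2)^2 = (z - 1) / 2" and "csqrt (z - 1) / sqrt 2 \<in> ball 0 (1/2)"
proof -
  show sq: "(csqrt (z - 1) / sqrt 2)^2 = (z - 1) / 2"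
    by (simp add: power_divide flip: of_real_power)
  have "norm (csqrt (z - 1) / sqrt 2) ^ 2 < (1/2)^2"
    using assms by (simp add: norm_power[symmetric] sq norm_divide power_divide)
  then show "csqrt (z - 1) / sqrt 2 \<in> ball 0 (1/2)"
    using power2_less_imp_less[of "norm (csqrt (z - 1) / sqrt 2)" "1/2"] by simp
qed

lemma xi_eq_arsinh:
  assumes "norm (z - 1) < 1/2"
  shows "xi z = 2 * arsinh (csqrt (z - 1) / sqrt 2)"
proof -
  define u where "u = csqrt (z - 1)"
  define v where "v = csqrt (z + 1)"
  define s where "s = complex_of_real (sqrt 2)"
  define q where "q = u / s"
  define p where "p = v / s"
  have s: "s^2 = 2" "s \<noteq> 0" by (simp_all add: s_def flip: of_real_power)
  have u: "u^2 = z - 1" and v: "v^2 = z + 1" by (simp_all add: u_def v_def)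
  have "q = csqrt (z - 1) / sqrt 2" by (simp add: q_def u_def s_def)
  then have q: "q^2 = (z - 1) / 2" and q_small: "norm q < 1/2"
    using half_csqrt_shift[OF assms] by simp_all
  have "Re (z + 1) > 0" using assms abs_Re_le_cmod[of "z - 1"] by simp
  then have "Re v \<noteq> 0"
    using arg_cong[OF v, of Re] by (auto simp: Re_power2) (use zero_le_power2[of "Im v"] in linarith)
  then have "Re v > 0" using csqrt_principal[of "z + 1"] by (auto simp: v_def)
  then have "Re p > 0" by (simp add: p_def s_def Re_divide_of_real)
  moreover have "p^2 = q^2 + 1" by (simp add: p_def power_divide v s q field_simps)
  ultimately have p: "csqrt (q^2 + 1) = p" by (intro csqrt_unique) auto
  have "z + sqrtz2m1 z = (q + p)^2"
  proof -
    have "(q + p)^2 = (u^2 + v^2 + 2 * u * v) / s^2"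
      using s(2) by (simp add: q_def p_def power2_eq_square field_simps)
    also have "\<dots> = z + u * v" by (simp add: u v s field_simps)
    finally show ?thesis by (simp add: sqrtz2m1_def u_def v_def)
  qed
  moreover have "Ln ((q + p)^2) = 2 * Ln (q + p)"
  proof -
    have "Re (q + p) > 0" using Re_arsinh_args_pos(2)[OF q_small] by (simp add: p)
    then have "q + p \<noteq> 0" and "\<bar>Im (Ln (q + p))\<bar> < pi / 2"
      by (metis less_irrefl zero_complex.sel(1), rule Re_Ln_pos_lt_imp)
    then show ?thesis
      unfolding power2_eq_square by (subst Ln_times_simple) (auto simp: abs_less_iff)
  qed
  ultimately show ?thesis
    unfolding xi_def arsinh_complex_eq u_def[symmetric] s_def[symmetric] q_def[symmetric] p by simp
qed

lemma holomorphic_on_even_comp_half_csqrt_shift: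
  fixes f :: "complex \<Rightarrow> complex"
  assumes "f holomorphic_on ball 0 (1/2)" and "\<And>t. t \<in> ball 0 (1/2) \<Longrightarrow> f (-t) = f t"
  shows "(\<lambda>z. f (csqrt (z - 1) / sqrt 2)) holomorphic_on ball 1 (1/2)"
proof -
  obtain g where g: "g holomorphic_on ball 0 (1/4)" "\<And>t. t \<in> ball 0 (1/2) \<Longrightarrow> f t = g (t^2)"
    using holomorphic_even_eq_comp_square[OF assms] by (auto simp: power_divide)
  have "(\<lambda>z. g ((z - 1) / 2)) holomorphic_on ball 1 (1/2)"
    by (rule holomorphic_on_compose_gen[OF _ g(1), unfolded o_def])
       (auto intro!: holomorphic_intros simp: dist_norm norm_divide norm_minus_commute)
  then show ?thesis
  proof (rule holomorphic_transform)
    fix z :: complex assume "z \<in> ball 1 (1/2)"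
    then have "norm (z - 1) < 1/2" by (simp add: dist_norm norm_minus_commute)
    then show "g ((z - 1) / 2) = f (csqrt (z - 1) / sqrt 2)"
      using g(2) half_csqrt_shift by metis
  qed
qed

lemma xi_square_analytic_at_1: "(\<lambda>z. xi z ^ 2) analytic_on {1}"
proof -
  have "(\<lambda>z. (2 * arsinh (csqrt (z - 1) / sqrt 2))^2) holomorphic_on ball 1 (1/2)"
    using holomorphic_on_arsinh_ball arsinh_minus_complex
    by (intro holomorphic_on_even_comp_half_csqrt_shift holomorphic_intros) auto
  then have "(\<lambda>z. xi z ^ 2) holomorphic_on ball 1 (1/2)"
    by (rule holomorphic_transform) (simp add: xi_eq_arsinh dist_norm norm_minus_commute)
  then show ?thesis unfolding analytic_at_ball by (intro exI[of _ "1/2"]) simp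
qed

lemma csqrt_xi_analytic_at_1: "(\<lambda>z. csqrt (z - 1) * xi z) analytic_on {1}"
proof -
  have "(\<lambda>z. sqrt 2 * (csqrt (z - 1) / sqrt 2) * (2 * arsinh (csqrt (z - 1) / sqrt 2)))
          holomorphic_on ball 1 (1/2)"
    using holomorphic_on_arsinh_ball arsinh_minus_complex
    by (intro holomorphic_on_even_comp_half_csqrt_shift[where f = "\<lambda>t. sqrt 2 * t * (2 * arsinh t)"]
        holomorphic_intros) auto
  then have "(\<lambda>z. csqrt (z - 1) * xi z) holomorphic_on ball 1 (1/2)"
    by (rule holomorphic_transform) (simp add: xi_eq_arsinh dist_norm norm_minus_commute)
  then show ?thesis unfolding analytic_at_ball by (intro exI[of _ "1/2"]) simp
qed

lemma beta_square: "beta z ^ 2 = z^2 / ((z - 1) * (z + 1))"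
  by (simp add: beta_def sqrtz2m1_def power_divide power_mult_distrib)

lemma csqrt_beta_meromorphic_at_1: "(\<lambda>z. csqrt (z - 1) * beta z) meromorphic_on {1}"
proof -
  have "(\<lambda>z. z / csqrt (z + 1)) analytic_on {1}"
    by (auto intro!: analytic_intros simp: complex_nonpos_Reals_iff)
  moreover have "\<forall>\<^sub>F z in at 1. z / csqrt (z + 1) = csqrt (z - 1) * beta z"
    by (auto simp: eventually_at_filter beta_def sqrtz2m1_def)
  ultimately show ?thesis
    using meromorphic_on_cong analytic_on_imp_meromorphic_on by (metis singletonD)
qed

lemma meromorphic_on_poly_comp: "f meromorphic_on A \<Longrightarrow> (\<lambda>z. poly p (f z)) meromorphic_on A"
  unfolding poly_altdef by (intro meromorphic_intros)

lemma mult_divide_odd_power: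
  fixes u c n x :: "'a::field"
  shows "u * (c / (n * x ^ (2 * s + 1))) = c * (u * x) / (n * (x^2) ^ (s + 1))"
proof (cases "x = 0")
  case False
  have "(x^2) ^ (s + 1) = x ^ (2 * s + 1) * x"
    unfolding power_mult[symmetric] by (simp add: power_add power2_eq_square mult.assoc)
  with False show ?thesis by (simp add: mult_ac)
qed simp

lemma calE_even_meromorphic_at_1: "calE \<nu> (2 * s) meromorphic_on {1}"
proof -
  obtain q where "\<And>b. Et \<nu> (2 * s) b = poly q b" "\<And>b. poly q (-b) = poly q b"
    using Et_poly_parity[of \<nu> "2 * s"] by auto
  then obtain pe where Et_eq: "\<And>b. Et \<nu> (2 * s) b = poly pe (b^2)"
    using even_poly_eq_poly_square[of q] by metis
  have "calE \<nu> (2 * s) = (\<lambda>z. poly pe (beta z ^ 2)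
          + (-1) ^ (2 * s + 1) * of_real (a \<nu> (2 * s)) / (of_nat (2 * s) * (xi z ^ 2) ^ s))"
    by (simp add: fun_eq_iff calE_def Et_eq power_mult)
  then show ?thesis
    unfolding beta_square
    by (simp only:) (intro meromorphic_intros meromorphic_on_poly_comp
          analytic_on_imp_meromorphic_on[OF xi_square_analytic_at_1])
qed

lemma csqrt_calE_odd_meromorphic_at_1:
  "(\<lambda>z. csqrt (z - 1) * calE \<nu> (2 * s + 1) z) meromorphic_on {1}"
proof -
  obtain q where "\<And>b. Et \<nu> (2 * s + 1) b = poly q b" "\<And>b. poly q (-b) = - poly q b"
    using Et_poly_parity[of \<nu> "2 * s + 1"] by auto
  then obtain po where Et_eq: "\<And>b. Et \<nu> (2 * s + 1) b = b * poly po (b^2)"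
    using odd_poly_eq_poly_square[of q] by metis
  have "(\<lambda>z. csqrt (z - 1) * calE \<nu> (2 * s + 1) z) = (\<lambda>z. csqrt (z - 1) * beta z * poly po (beta z ^ 2)
          + (-1) ^ (2 * s + 1 + 1) * of_real (a \<nu> (2 * s + 1)) * (csqrt (z - 1) * xi z)
            / (of_nat (2 * s + 1) * (xi z ^ 2) ^ (s + 1)))"
    by (simp only: calE_def Et_eq distrib_left mult_divide_odd_power mult.assoc)
  then show ?thesis
    unfolding beta_square
    by (simp only:) (intro meromorphic_intros meromorphic_on_poly_comp csqrt_beta_meromorphic_at_1
          analytic_on_imp_meromorphic_on[OF xi_square_analytic_at_1]
          analytic_on_imp_meromorphic_on[OF csqrt_xi_analytic_at_1])
qed

theorem lemma3p1:
  fixes \<nu> :: real and s :: nat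
  assumes "s \<ge> 1"
  shows "(\<exists>g. g meromorphic_on {1} \<and>
            (\<forall>\<^sub>F z in at 1. z \<notin> cut \<longrightarrow> g z = csqrt (z - 1) * calE \<nu> (2 * s + 1) z))
       \<and> (\<exists>g. g meromorphic_on {1} \<and>
            (\<forall>\<^sub>F z in at 1. z \<notin> cut \<longrightarrow> g z = calE \<nu> (2 * s) z))"
  using csqrt_calE_odd_meromorphic_at_1[of \<nu> s] calE_even_meromorphic_at_1[of \<nu> s] by auto

end
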